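(* Let $\mathscr T$ be a functor satisfying (T1)–(T4) and $\mathfrak K=(K,\bigsqcup,\odot,{}^*,{\sim},e)$ a $\mathscr T$-based orthomodular dynamic algebra. Then $\mathfrak K$, $\mathscr P(\mathscr T(\mathbf{Lin}(\widetilde{\mathfrak K})))$ and $(\mathscr P(\mathscr T(K)),\bigcup,\boxdot,{}^\star,\boxtimes,\{e\})$ are mutually isomorphic $\mathscr T$-based orthomodular dynamic algebras.
   Context: Here $h\colon K\to\mathscr P(\mathscr T(K))$ is $h(v)=\{w\in\mathscr T(K)\mid w\sqsubseteq v\}$, and on the powerset $\mathscr P(\mathscr T(K))$: $A\boxdot B=h(\bigsqcup A\odot\bigsqcup B)$, $A^\star=h((\bigsqcup A)^* )$, $\boxtimes A=h({\sim}\bigsqcup A)$, joins are unions, unit $\{e\}$. $\widetilde{\mathfrak K}$ denotes the complete orthomodular lattice $(\widetilde K,\preceq,{}^\perp)$. An involutive unital quantale is $(Q,\bigsqcup,\odot,{}^*,e)$: complete join-semilattice $Q$ (order $\sqsubseteq$), associative $\odot$ distributing over arbitrary joins in each argument, unit $e$, ${}^*$ with $x^{**}=x$, $(x\odot y)^*=y^*\odot x^*$, $(\bigsqcup x_i)^*=\bigsqcup x_i^*$. An involutive generalized dynamic algebra (IDA) is such a quantale with ${\sim}\colon K\to K$ satisfying, for all $x,y$ and families $(x_i)$: ${\sim}(x\odot{\sim}{\sim}y)={\sim}(x\odot y)$; ${\sim}(\bigsqcup{\sim}{\sim}x_i)={\sim}(\bigsqcup x_i)$; $({\sim}x)^*={\sim}x$;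 ${\sim}{\sim}({\sim}{\sim}x\odot y)={\sim}({\sim}x\sqcup{\sim}({\sim}x\sqcup y))$. Test set $\widetilde K=\{{\sim}k\}$; $\bigvee W={\sim}{\sim}\bigsqcup W$; $w^\perp={\sim}w$; $k\preceq l$ iff $\bigvee\{k,l\}=l$; $k\bullet v={\sim}{\sim}(k\odot v)$; $k\equiv l$ iff $k\bullet w=l\bullet w$ for all $w\in\widetilde K$. IDA morphisms preserve arbitrary joins, $\odot$, ${}^*$, unit, ${\sim}$ (category $\mathbb{IDA}$); isomorphisms are bijective morphisms; semi-Foulis means $(\widetilde K,\preceq,{}^\perp)$ is a complete orthomodular lattice. $\mathbb{IM}$: involutive monoids and homomorphisms. For a complete orthomodular lattice $\mathcal M$: $\pi_m(x)=m\wedge(m^\perp\vee x)$; $\mathbf{Lin}(\mathcal M)$ is the set of maps $f$ admitting $f^*$ with $f(x)\le y^\perp\iff x\le f^*(y)^\perp$, an IDA under pointwise joins, composition, ${}^*$, $\mathrm{id}$, ${\sim}f=\pi_{f(1)^\perp}$. For an involutive submonoid $L\supseteq\{\pi_m\}$, $\mathscr P(L)$ is the IDA of subsets of $L$ with union, setwise composition and involution, unit $\{\mathrm{id}\}$, ${\sim}A=\{\pi_{(\bigvee_{a\in A}a(1))^\perp}\}$. $\mathscr T\colon\mathbb{IDA}\to\mathbb{IM}$ satisfies: (T1) $\widetilde K\subseteq\mathscr T(K)\subseteq K$, $\mathscr T(K)$ an involutive submonoid; (T2) for semi-Foulis $\mathfrak K$ with $s=t\iff s\equiv t$ on $\mathscr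 T(K)$, $k\mapsto k\bullet(-)$ is an isomorphism $\mathscr T(\mathfrak K)\to\mathscr T(\mathbf{Lin}(\widetilde{\mathfrak K}))$; (T3) $f\mapsto\{f\}$ is an isomorphism $\mathscr T(\mathbf{Lin}(\mathcal M))\to\mathscr T(\mathscr P(\mathscr T(\mathbf{Lin}(\mathcal M))))$; (T4) $\mathscr T(f)$ is the restriction of $f$. A $\mathscr T$-based orthomodular dynamic algebra is an IDA with: (TODA1) $(\widetilde K,\preceq,{}^\perp)$ a complete orthomodular lattice; (TODA2) every $A$ with $\mathscr T(K)\subseteq A\subseteq K$ closed under $\odot$, ${}^*$, arbitrary joins equals $K$; (TODA3) for $S,T\subseteq\mathscr T(K)$, $\bigsqcup S=\bigsqcup T$ iff $S=T$; (TODA4) for $s,t\in\mathscr T(K)$, $s=t$ iff $s\equiv t$. *)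

theory Defs
  imports Main "HOL-Library.FuncSet"
begin

section \<open>Involutive generalized dynamic algebras (IDAs)\<close>

record 'a ida =
  ida_carrier :: "'a set"
  ida_Sup :: "'a set \<Rightarrow> 'a"
  ida_mult :: "'a \<Rightarrow> 'a \<Rightarrow> 'a"
  ida_inv :: "'a \<Rightarrow> 'a"
  ida_neg :: "'a \<Rightarrow> 'a"
  ida_unit :: 'a

definition ida_le :: "('a, 'z) ida_scheme \<Rightarrow> 'a \<Rightarrow> 'a \<Rightarrow> bool" where
  "ida_le K x y \<longleftrightarrow> ida_Sup K {x, y} = y"

definition is_ida :: "('a, 'z) ida_scheme \<Rightarrow> bool" where
  "is_ida K \<longleftrightarrow>
    (let C = ida_carrier K; J = ida_Sup K; m = ida_mult K; s = ida_inv K;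
         n = ida_neg K; e = ida_unit K; le = ida_le K in
      \<comment> \<open>closure\<close>
      (\<forall>A\<subseteq>C. J A \<in> C) \<and> (\<forall>x\<in>C. \<forall>y\<in>C. m x y \<in> C) \<and> (\<forall>x\<in>C. s x \<in> C) \<and>
      (\<forall>x\<in>C. n x \<in> C) \<and> e \<in> C \<and>
      \<comment> \<open>complete join-semilattice\<close>
      (\<forall>x\<in>C. le x x) \<and> (\<forall>x\<in>C. \<forall>y\<in>C. le x y \<and> le y x \<longrightarrow> x = y) \<and>
      (\<forall>x\<in>C. \<forall>y\<in>C. \<forall>z\<in>C. le x y \<and> le y z \<longrightarrow> le x z) \<and>
      (\<forall>A\<subseteq>C. (\<forall>a\<in>A. le a (J A)) \<and> (\<forall>u\<in>C. (\<forall>a\<in>A. le a u) \<longrightarrow> le (J A) u)) \<and>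
      \<comment> \<open>unital quantale\<close>
      (\<forall>x\<in>C. \<forall>y\<in>C. \<forall>z\<in>C. m (m x y) z = m x (m y z)) \<and>
      (\<forall>x\<in>C. m e x = x \<and> m x e = x) \<and>
      (\<forall>x\<in>C. \<forall>A\<subseteq>C. m x (J A) = J ((\<lambda>a. m x a) ` A) \<and> m (J A) x = J ((\<lambda>a. m a x) ` A)) \<and>
      \<comment> \<open>involution\<close>
      (\<forall>x\<in>C. s (s x) = x) \<and> (\<forall>x\<in>C. \<forall>y\<in>C. s (m x y) = m (s y) (s x)) \<and>
      (\<forall>A\<subseteq>C. s (J A) = J (s ` A)) \<and>
      \<comment> \<open>IDA axioms for sim\<close>
      (\<forall>x\<in>C. \<forall>y\<in>C. n (m x (n (n y))) = n (m x y)) \<and>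
      (\<forall>A\<subseteq>C. n (J ((\<lambda>x. n (n x)) ` A)) = n (J A)) \<and>
      (\<forall>x\<in>C. s (n x) = n x) \<and>
      (\<forall>x\<in>C. \<forall>y\<in>C. n (n (m (n (n x)) y)) = n (J {n x, n (J {n x, y})})))"

definition ida_tests :: "('a, 'z) ida_scheme \<Rightarrow> 'a set" where
  "ida_tests K = ida_neg K ` ida_carrier K"

definition tvee :: "('a, 'z) ida_scheme \<Rightarrow> 'a set \<Rightarrow> 'a" where
  "tvee K W = ida_neg K (ida_neg K (ida_Sup K W))"

definition tle :: "('a, 'z) ida_scheme \<Rightarrow> 'a \<Rightarrow> 'a \<Rightarrow> bool" where
  "tle K k l \<longleftrightarrow> tvee K {k, l} = l"

definition bullet :: "('a, 'z) ida_scheme \<Rightarrow> 'a \<Rightarrow> 'a \<Rightarrow> 'a" where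
  "bullet K k v = ida_neg K (ida_neg K (ida_mult K k v))"

definition tequiv :: "('a, 'z) ida_scheme \<Rightarrow> 'a \<Rightarrow> 'a \<Rightarrow> bool" where
  "tequiv K k l \<longleftrightarrow> (\<forall>w\<in>ida_tests K. bullet K k w = bullet K l w)"

record 'a oml =
  oml_carrier :: "'a set"
  oml_le :: "'a \<Rightarrow> 'a \<Rightarrow> bool"
  oml_perp :: "'a \<Rightarrow> 'a"

definition tests_oml :: "('a, 'z) ida_scheme \<Rightarrow> 'a oml" where
  "tests_oml K = \<lparr>oml_carrier = ida_tests K, oml_le = tle K, oml_perp = ida_neg K\<rparr>"

definition oml_is_lub :: "'a oml \<Rightarrow> 'a set \<Rightarrow> 'a \<Rightarrow> bool" where
  "oml_is_lub M S x \<longleftrightarrow> x \<in> oml_carrier M \<and> (\<forall>s\<in>S. oml_le M s x) \<and>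
     (\<forall>u\<in>oml_carrier M. (\<forall>s\<in>S. oml_le M s u) \<longrightarrow> oml_le M x u)"

definition oml_is_glb :: "'a oml \<Rightarrow> 'a set \<Rightarrow> 'a \<Rightarrow> bool" where
  "oml_is_glb M S x \<longleftrightarrow> x \<in> oml_carrier M \<and> (\<forall>s\<in>S. oml_le M x s) \<and>
     (\<forall>u\<in>oml_carrier M. (\<forall>s\<in>S. oml_le M u s) \<longrightarrow> oml_le M u x)"

definition oml_Sup :: "'a oml \<Rightarrow> 'a set \<Rightarrow> 'a" where
  "oml_Sup M S = (THE x. oml_is_lub M S x)"

definition oml_Inf :: "'a oml \<Rightarrow> 'a set \<Rightarrow> 'a" where
  "oml_Inf M S = (THE x. oml_is_glb M S x)"

definition oml_join :: "'a oml \<Rightarrow> 'a \<Rightarrow> 'a \<Rightarrow> 'a" where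
  "oml_join M x y = oml_Sup M {x, y}"

definition oml_meet :: "'a oml \<Rightarrow> 'a \<Rightarrow> 'a \<Rightarrow> 'a" where
  "oml_meet M x y = oml_Inf M {x, y}"

definition oml_top :: "'a oml \<Rightarrow> 'a" where
  "oml_top M = oml_Sup M (oml_carrier M)"

definition oml_bot :: "'a oml \<Rightarrow> 'a" where
  "oml_bot M = oml_Sup M {}"

definition complete_oml :: "'a oml \<Rightarrow> bool" where
  "complete_oml M \<longleftrightarrow>
    (let C = oml_carrier M; le = oml_le M; p = oml_perp M in
      (\<forall>x\<in>C. le x x) \<and> (\<forall>x\<in>C. \<forall>y\<in>C. le x y \<and> le y x \<longrightarrow> x = y) \<and>
      (\<forall>x\<in>C. \<forall>y\<in>C. \<forall>z\<in>C. le x y \<and> le y z \<longrightarrow> le x z) \<and>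
      (\<forall>S\<subseteq>C. \<exists>x. oml_is_lub M S x) \<and>
      (\<forall>x\<in>C. p x \<in> C) \<and> (\<forall>x\<in>C. p (p x) = x) \<and>
      (\<forall>x\<in>C. \<forall>y\<in>C. le x y \<longrightarrow> le (p y) (p x)) \<and>
      (\<forall>x\<in>C. oml_join M x (p x) = oml_top M \<and> oml_meet M x (p x) = oml_bot M) \<and>
      (\<forall>x\<in>C. \<forall>y\<in>C. le x y \<longrightarrow> y = oml_join M x (oml_meet M (p x) y)))"

text \<open>Maps on the carrier of M are represented extensionally (value undefined outside).\<close>

definition lin_adjoint :: "'a oml \<Rightarrow> ('a \<Rightarrow> 'a) \<Rightarrow> ('a \<Rightarrow> 'a) \<Rightarrow> bool" where
  "lin_adjoint M f g \<longleftrightarrow> (\<forall>x\<in>oml_carrier M. \<forall>y\<in>oml_carrier M.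
      oml_le M (f x) (oml_perp M y) \<longleftrightarrow> oml_le M x (oml_perp M (g y)))"

definition lin_maps :: "'a oml \<Rightarrow> ('a \<Rightarrow> 'a) set" where
  "lin_maps M = {f \<in> oml_carrier M \<rightarrow>\<^sub>E oml_carrier M.
      \<exists>g \<in> oml_carrier M \<rightarrow>\<^sub>E oml_carrier M. lin_adjoint M f g}"

definition proj :: "'a oml \<Rightarrow> 'a \<Rightarrow> ('a \<Rightarrow> 'a)" where
  "proj M m = (\<lambda>x\<in>oml_carrier M. oml_meet M m (oml_join M (oml_perp M m) x))"

definition lin_ida :: "'a oml \<Rightarrow> ('a \<Rightarrow> 'a) ida" where
  "lin_ida M = \<lparr>
     ida_carrier = lin_maps M,
     ida_Sup = (\<lambda>F. (\<lambda>x\<in>oml_carrier M. oml_Sup M ((\<lambda>f. f x) ` F))),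
     ida_mult = (\<lambda>f g. (\<lambda>x\<in>oml_carrier M. f (g x))),
     ida_inv = (\<lambda>f. THE g. g \<in> oml_carrier M \<rightarrow>\<^sub>E oml_carrier M \<and> lin_adjoint M f g),
     ida_neg = (\<lambda>f. proj M (oml_perp M (f (oml_top M)))),
     ida_unit = (\<lambda>x\<in>oml_carrier M. x)\<rparr>"

definition pset_ida :: "'a oml \<Rightarrow> ('a \<Rightarrow> 'a) set \<Rightarrow> ('a \<Rightarrow> 'a) set ida" where
  "pset_ida M L = \<lparr>
     ida_carrier = Pow L,
     ida_Sup = Union,
     ida_mult = (\<lambda>A B. {ida_mult (lin_ida M) a b | a b. a \<in> A \<and> b \<in> B}),
     ida_inv = (\<lambda>A. ida_inv (lin_ida M) ` A),
     ida_neg = (\<lambda>A. {proj M (oml_perp M (oml_Sup M ((\<lambda>a. a (oml_top M)) ` A)))}),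
     ida_unit = {ida_unit (lin_ida M)}\<rparr>"

text \<open>The powerset algebra with the boxed operations, built over S = T(K).\<close>

definition hdown :: "('a, 'z) ida_scheme \<Rightarrow> 'a set \<Rightarrow> 'a \<Rightarrow> 'a set" where
  "hdown K S v = {w \<in> S. ida_le K w v}"

definition box_ida :: "('a, 'z) ida_scheme \<Rightarrow> 'a set \<Rightarrow> 'a set ida" where
  "box_ida K S = \<lparr>
     ida_carrier = Pow S,
     ida_Sup = Union,
     ida_mult = (\<lambda>A B. hdown K S (ida_mult K (ida_Sup K A) (ida_Sup K B))),
     ida_inv = (\<lambda>A. hdown K S (ida_inv K (ida_Sup K A))),
     ida_neg = (\<lambda>A. hdown K S (ida_neg K (ida_Sup K A))),
     ida_unit = {ida_unit K}\<rparr>"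

definition ida_hom :: "('a, 'z) ida_scheme \<Rightarrow> ('b, 'y) ida_scheme \<Rightarrow> ('a \<Rightarrow> 'b) \<Rightarrow> bool" where
  "ida_hom A B f \<longleftrightarrow>
     f ` ida_carrier A \<subseteq> ida_carrier B \<and>
     (\<forall>X\<subseteq>ida_carrier A. f (ida_Sup A X) = ida_Sup B (f ` X)) \<and>
     (\<forall>x\<in>ida_carrier A. \<forall>y\<in>ida_carrier A. f (ida_mult A x y) = ida_mult B (f x) (f y)) \<and>
     (\<forall>x\<in>ida_carrier A. f (ida_inv A x) = ida_inv B (f x)) \<and>
     (\<forall>x\<in>ida_carrier A. f (ida_neg A x) = ida_neg B (f x)) \<and>
     f (ida_unit A) = ida_unit B"

definition ida_iso :: "('a, 'z) ida_scheme \<Rightarrow> ('b, 'y) ida_scheme \<Rightarrow> ('a \<Rightarrow> 'b) \<Rightarrow> bool" where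
  "ida_iso A B f \<longleftrightarrow> ida_hom A B f \<and> bij_betw f (ida_carrier A) (ida_carrier B)"

definition inv_submonoid :: "('a, 'z) ida_scheme \<Rightarrow> 'a set \<Rightarrow> bool" where
  "inv_submonoid K S \<longleftrightarrow> S \<subseteq> ida_carrier K \<and> ida_unit K \<in> S \<and>
     (\<forall>x\<in>S. \<forall>y\<in>S. ida_mult K x y \<in> S) \<and> (\<forall>x\<in>S. ida_inv K x \<in> S)"

definition im_iso :: "('a, 'z) ida_scheme \<Rightarrow> 'a set \<Rightarrow> ('b, 'y) ida_scheme \<Rightarrow> 'b set \<Rightarrow> ('a \<Rightarrow> 'b) \<Rightarrow> bool" where
  "im_iso A S B S' f \<longleftrightarrow> bij_betw f S S' \<and>
     (\<forall>x\<in>S. \<forall>y\<in>S. f (ida_mult A x y) = ida_mult B (f x) (f y)) \<and>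
     (\<forall>x\<in>S. f (ida_inv A x) = ida_inv B (f x)) \<and>
     f (ida_unit A) = ida_unit B"

section \<open>Conditions (T1)--(T4), instantiated at given types\<close>

definition T1_at :: "('a ida \<Rightarrow> 'a set) \<Rightarrow> bool" where
  "T1_at T \<longleftrightarrow> (\<forall>K. is_ida K \<longrightarrow> ida_tests K \<subseteq> T K \<and> inv_submonoid K (T K))"

definition T2_at :: "('a ida \<Rightarrow> 'a set) \<Rightarrow> (('a \<Rightarrow> 'a) ida \<Rightarrow> ('a \<Rightarrow> 'a) set) \<Rightarrow> bool" where
  "T2_at T TL \<longleftrightarrow> (\<forall>K. is_ida K \<and> complete_oml (tests_oml K) \<and>
       (\<forall>s\<in>T K. \<forall>t\<in>T K. s = t \<longleftrightarrow> tequiv K s t) \<longrightarrow>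
     im_iso K (T K) (lin_ida (tests_oml K)) (TL (lin_ida (tests_oml K)))
       (\<lambda>k. \<lambda>w\<in>ida_tests K. bullet K k w))"

definition T3_at :: "(('a \<Rightarrow> 'a) ida \<Rightarrow> ('a \<Rightarrow> 'a) set) \<Rightarrow> (('a \<Rightarrow> 'a) set ida \<Rightarrow> ('a \<Rightarrow> 'a) set set) \<Rightarrow> bool" where
  "T3_at TL TP \<longleftrightarrow> (\<forall>M. complete_oml M \<longrightarrow>
     im_iso (lin_ida M) (TL (lin_ida M))
            (pset_ida M (TL (lin_ida M))) (TP (pset_ida M (TL (lin_ida M)))) (\<lambda>f. {f}))"

text \<open>(T4): T(f) is the restriction of f; i.e. every IDA morphism f maps T(A) into T(B).\<close>

definition T4_at :: "('a ida \<Rightarrow> 'a set) \<Rightarrow> ('b ida \<Rightarrow> 'b set) \<Rightarrow> bool" where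
  "T4_at TA TB \<longleftrightarrow> (\<forall>A B f. is_ida A \<and> is_ida B \<and> ida_hom A B f \<longrightarrow> f ` TA A \<subseteq> TB B)"

section \<open>T-based orthomodular dynamic algebras\<close>

definition toda :: "('a ida \<Rightarrow> 'a set) \<Rightarrow> 'a ida \<Rightarrow> bool" where
  "toda T K \<longleftrightarrow> is_ida K \<and>
     complete_oml (tests_oml K) \<and>
     (\<forall>A. T K \<subseteq> A \<and> A \<subseteq> ida_carrier K \<and>
          (\<forall>x\<in>A. \<forall>y\<in>A. ida_mult K x y \<in> A) \<and> (\<forall>x\<in>A. ida_inv K x \<in> A) \<and>
          (\<forall>B\<subseteq>A. ida_Sup K B \<in> A) \<longrightarrow> A = ida_carrier K) \<and>
     (\<forall>S T'. S \<subseteq> T K \<and> T' \<subseteq> T K \<longrightarrow> (ida_Sup K S = ida_Sup K T' \<longleftrightarrow> S = T')) \<and>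
     (\<forall>s\<in>T K. \<forall>t\<in>T K. s = t \<longleftrightarrow> tequiv K s t)"

end

theory Submission
  imports Defs
begin

(* Let h(k) be the set of elements of T(K) below k. The joins of subsets of T(K) form a
   subalgebra containing T(K), so by (TODA2) every k is such a join, and by (TODA3) h(k) is
   the only subset of T(K) with join k. Hence h is a bijection from K onto the power set of
   T(K), inverse to the join, and it turns the operations of K into the boxed ones.
   Following h by the monoid isomorphism k |-> k . (-) of (T2) gives an isomorphism onto
   P(T(Lin(tests))); it respects the negation because ~k acts on the tests as the Sasaki
   projection onto ~k, which is the fourth IDA axiom. Finally, by (T4) an isomorphism maps
   T(A) onto T(B), and it carries tests, their order and the relation == along, so being a
   T-based orthomodular dynamic algebra is invariant under isomorphism. *)

section \<open>Complete orthomodular lattices\<close>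

lemmas complete_omlD = complete_oml_def[THEN iffD1, unfolded Let_def]

lemma oml_Sup_eqI:
  assumes antisym: "\<And>x y. x \<in> oml_carrier M \<Longrightarrow> y \<in> oml_carrier M \<Longrightarrow>
      oml_le M x y \<Longrightarrow> oml_le M y x \<Longrightarrow> x = y"
    and lub: "oml_is_lub M S x"
  shows "oml_Sup M S = x"
  unfolding oml_Sup_def
proof (rule the_equality)
  show "y = x" if "oml_is_lub M S y" for y
    using that lub antisym unfolding oml_is_lub_def by blast
qed (rule lub)

lemma oml_Inf_eqI:
  assumes antisym: "\<And>x y. x \<in> oml_carrier M \<Longrightarrow> y \<in> oml_carrier M \<Longrightarrow>
      oml_le M x y \<Longrightarrow> oml_le M y x \<Longrightarrow> x = y"
    and glb: "oml_is_glb M S x"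
  shows "oml_Inf M S = x"
  unfolding oml_Inf_def
proof (rule the_equality)
  show "y = x" if "oml_is_glb M S y" for y
    using that glb antisym unfolding oml_is_glb_def by blast
qed (rule glb)

context
  fixes M :: "'a oml"
  assumes complete: "complete_oml M"
begin

lemma oml_refl: "x \<in> oml_carrier M \<Longrightarrow> oml_le M x x"
  using complete_omlD[OF complete] by meson
lemma oml_antisym:
  "x \<in> oml_carrier M \<Longrightarrow> y \<in> oml_carrier M \<Longrightarrow> oml_le M x y \<Longrightarrow> oml_le M y x \<Longrightarrow> x = y"
  using complete_omlD[OF complete] by meson
lemma oml_trans:
  "x \<in> oml_carrier M \<Longrightarrow> y \<in> oml_carrier M \<Longrightarrow> z \<in> oml_carrier M \<Longrightarrow>
   oml_le M x y \<Longrightarrow> oml_le M y z \<Longrightarrow> oml_le M x z"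
  using complete_omlD[OF complete] by meson
lemma oml_lub_exists: "S \<subseteq> oml_carrier M \<Longrightarrow> \<exists>x. oml_is_lub M S x"
  using complete_omlD[OF complete] by meson
lemma oml_perp_closed: "x \<in> oml_carrier M \<Longrightarrow> oml_perp M x \<in> oml_carrier M"
  using complete_omlD[OF complete] by meson
lemma oml_perp_perp: "x \<in> oml_carrier M \<Longrightarrow> oml_perp M (oml_perp M x) = x"
  using complete_omlD[OF complete] by meson
lemma oml_perp_antimono:
  "x \<in> oml_carrier M \<Longrightarrow> y \<in> oml_carrier M \<Longrightarrow> oml_le M x y \<Longrightarrow> oml_le M (oml_perp M y) (oml_perp M x)"
  using complete_omlD[OF complete] by meson
lemma oml_join_perp: "x \<in> oml_carrier M \<Longrightarrow> oml_join M x (oml_perp M x) = oml_top M"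
  using complete_omlD[OF complete] by meson
lemma oml_meet_perp: "x \<in> oml_carrier M \<Longrightarrow> oml_meet M x (oml_perp M x) = oml_bot M"
  using complete_omlD[OF complete] by meson
lemma oml_orthomodular:
  "x \<in> oml_carrier M \<Longrightarrow> y \<in> oml_carrier M \<Longrightarrow> oml_le M x y \<Longrightarrow>
   y = oml_join M x (oml_meet M (oml_perp M x) y)"
  using complete_omlD[OF complete] by meson

lemma oml_glb_exists: "S \<subseteq> oml_carrier M \<Longrightarrow> \<exists>x. oml_is_glb M S x"
proof -
  obtain x where "oml_is_lub M {u \<in> oml_carrier M. \<forall>s\<in>S. oml_le M u s} x"
    using oml_lub_exists[of "{u \<in> oml_carrier M. \<forall>s\<in>S. oml_le M u s}"] by blast
  moreover assume "S \<subseteq> oml_carrier M"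
  ultimately have "oml_is_glb M S x"
    unfolding oml_is_lub_def oml_is_glb_def by blast
  then show ?thesis ..
qed

lemma oml_meet_closed:
  assumes "x \<in> oml_carrier M" "y \<in> oml_carrier M"
  shows "oml_meet M x y \<in> oml_carrier M"
proof -
  have "{x, y} \<subseteq> oml_carrier M" using assms by simp
  then obtain z where z: "oml_is_glb M {x, y} z" using oml_glb_exists by blast
  have "oml_meet M x y = z"
    unfolding oml_meet_def using oml_antisym z by (rule oml_Inf_eqI)
  then show ?thesis using z unfolding oml_is_glb_def by blast
qed

end

locale oml_order_iso =
  fixes M :: "'a oml" and N :: "'b oml" and \<phi> :: "'a \<Rightarrow> 'b"
  assumes complete: "complete_oml M"
    and bij: "bij_betw \<phi> (oml_carrier M) (oml_carrier N)"
    and le_iff: "\<And>x y. x \<in> oml_carrier M \<Longrightarrow> y \<in> oml_carrier M \<Longrightarrow>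
      oml_le N (\<phi> x) (\<phi> y) \<longleftrightarrow> oml_le M x y"
    and perp: "\<And>x. x \<in> oml_carrier M \<Longrightarrow> oml_perp N (\<phi> x) = \<phi> (oml_perp M x)"
begin

lemma target_carrier: "oml_carrier N = \<phi> ` oml_carrier M"
  using bij by (simp add: bij_betw_def)

lemma target_antisym:
  "a \<in> oml_carrier N \<Longrightarrow> b \<in> oml_carrier N \<Longrightarrow> oml_le N a b \<Longrightarrow> oml_le N b a \<Longrightarrow> a = b"
  unfolding target_carrier using le_iff oml_antisym[OF complete] by blast

lemma lub_image:
  assumes S: "S \<subseteq> oml_carrier M" and x: "oml_is_lub M S x"
  shows "oml_is_lub N (\<phi> ` S) (\<phi> x)"
  using x S le_iff unfolding oml_is_lub_def target_carrier by (auto simp: subset_iff)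

lemma glb_image:
  assumes S: "S \<subseteq> oml_carrier M" and x: "oml_is_glb M S x"
  shows "oml_is_glb N (\<phi> ` S) (\<phi> x)"
  using x S le_iff unfolding oml_is_glb_def target_carrier by (auto simp: subset_iff)

lemma Sup_image: "S \<subseteq> oml_carrier M \<Longrightarrow> oml_Sup N (\<phi> ` S) = \<phi> (oml_Sup M S)"
  by (metis lub_image oml_Sup_eqI oml_antisym[OF complete] oml_lub_exists[OF complete]
      target_antisym)

lemma Inf_image: "S \<subseteq> oml_carrier M \<Longrightarrow> oml_Inf N (\<phi> ` S) = \<phi> (oml_Inf M S)"
  by (metis glb_image oml_Inf_eqI oml_antisym[OF complete] oml_glb_exists[OF complete]
      target_antisym)

lemma join_image:
  "x \<in> oml_carrier M \<Longrightarrow> y \<in> oml_carrier M \<Longrightarrow> oml_join N (\<phi> x) (\<phi> y) = \<phi> (oml_join M x y)"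
  unfolding oml_join_def using Sup_image[of "{x, y}"] by simp

lemma meet_image:
  "x \<in> oml_carrier M \<Longrightarrow> y \<in> oml_carrier M \<Longrightarrow> oml_meet N (\<phi> x) (\<phi> y) = \<phi> (oml_meet M x y)"
  unfolding oml_meet_def using Inf_image[of "{x, y}"] by simp

lemma top_image: "oml_top N = \<phi> (oml_top M)"
  unfolding oml_top_def using Sup_image[of "oml_carrier M"] target_carrier by simp

lemma bot_image: "oml_bot N = \<phi> (oml_bot M)"
  unfolding oml_bot_def using Sup_image[of "{}"] by simp

lemma target_lub_exists: "S \<subseteq> oml_carrier N \<Longrightarrow> \<exists>z. oml_is_lub N S z"
proof -
  assume "S \<subseteq> oml_carrier N"
  then obtain S0 where S0: "S0 \<subseteq> oml_carrier M" "S = \<phi> ` S0"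
    unfolding target_carrier subset_image_iff by blast
  then obtain x where "oml_is_lub M S0 x" using oml_lub_exists[OF complete] by blast
  then show ?thesis using lub_image S0 by blast
qed

lemma target_orthomodular:
  assumes ab: "a \<in> oml_carrier N" "b \<in> oml_carrier N" "oml_le N a b"
  shows "b = oml_join N a (oml_meet N (oml_perp N a) b)"
proof -
  obtain x y where xy: "x \<in> oml_carrier M" "y \<in> oml_carrier M" "a = \<phi> x" "b = \<phi> y"
    using ab(1,2) unfolding target_carrier by blast
  then have "y = oml_join M x (oml_meet M (oml_perp M x) y)"
    using ab(3) le_iff oml_orthomodular[OF complete] by blast
  then show ?thesis
    using xy by (metis perp oml_perp_closed[OF complete] meet_image join_image oml_meet_closed[OF complete])
qed

lemma target_complete: "complete_oml N"
  unfolding complete_oml_def Let_def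
proof (intro conjI ballI allI impI)
  show "a = b" if "a \<in> oml_carrier N" "b \<in> oml_carrier N" "oml_le N a b \<and> oml_le N b a" for a b
    using that target_antisym by blast
  show "oml_le N a a" if "a \<in> oml_carrier N" for a
    using that oml_refl[OF complete] le_iff by (auto simp: target_carrier)
  show "oml_le N a c"
    if "a \<in> oml_carrier N" "b \<in> oml_carrier N" "c \<in> oml_carrier N"
      "oml_le N a b \<and> oml_le N b c" for a b c
    using that oml_trans[OF complete] le_iff unfolding target_carrier by blast
  show "oml_perp N a \<in> oml_carrier N" if "a \<in> oml_carrier N" for a
    using that oml_perp_closed[OF complete] perp by (auto simp: target_carrier)
  show "oml_perp N (oml_perp N a) = a" if "a \<in> oml_carrier N" for a
    using that by (auto simp: target_carrier perp oml_perp_closed[OF complete]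
        oml_perp_perp[OF complete])
  show "oml_le N (oml_perp N b) (oml_perp N a)"
    if "a \<in> oml_carrier N" "b \<in> oml_carrier N" "oml_le N a b" for a b
    using that by (auto simp: target_carrier perp le_iff oml_perp_closed[OF complete]
        oml_perp_antimono[OF complete])
  show "oml_join N a (oml_perp N a) = oml_top N" if "a \<in> oml_carrier N" for a
    using that by (auto simp: target_carrier perp join_image top_image
        oml_perp_closed[OF complete] oml_join_perp[OF complete])
  show "oml_meet N a (oml_perp N a) = oml_bot N" if "a \<in> oml_carrier N" for a
    using that by (auto simp: target_carrier perp meet_image bot_image
        oml_perp_closed[OF complete] oml_meet_perp[OF complete])
qed (use target_lub_exists target_orthomodular in blast)+

end

section \<open>Involutive generalized dynamic algebras\<close>

lemma tests_oml_simps [simp]: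
  "oml_carrier (tests_oml K) = ida_tests K"
  "oml_le (tests_oml K) = tle K"
  "oml_perp (tests_oml K) = ida_neg K"
  by (simp_all add: tests_oml_def)

locale ida_algebra =
  fixes K :: "('a, 'z) ida_scheme"
  assumes is_ida: "is_ida K"
begin

abbreviation "C \<equiv> ida_carrier K"
abbreviation "J \<equiv> ida_Sup K"
abbreviation "m \<equiv> ida_mult K"
abbreviation "s \<equiv> ida_inv K"
abbreviation "n \<equiv> ida_neg K"
abbreviation "e \<equiv> ida_unit K"
abbreviation "le \<equiv> ida_le K"
abbreviation "W \<equiv> ida_tests K"

lemmas ida_axioms = is_ida[unfolded is_ida_def Let_def]

lemma J_closed: "A \<subseteq> C \<Longrightarrow> J A \<in> C" using ida_axioms by meson
lemma m_closed: "x \<in> C \<Longrightarrow> y \<in> C \<Longrightarrow> m x y \<in> C" using ida_axioms by meson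
lemma s_closed: "x \<in> C \<Longrightarrow> s x \<in> C" using ida_axioms by meson
lemma n_closed: "x \<in> C \<Longrightarrow> n x \<in> C" using ida_axioms by meson
lemma e_closed: "e \<in> C" using ida_axioms by meson
lemma le_refl: "x \<in> C \<Longrightarrow> le x x" using ida_axioms by meson
lemma le_antisym: "x \<in> C \<Longrightarrow> y \<in> C \<Longrightarrow> le x y \<Longrightarrow> le y x \<Longrightarrow> x = y"
  using ida_axioms by meson
lemma le_trans: "x \<in> C \<Longrightarrow> y \<in> C \<Longrightarrow> z \<in> C \<Longrightarrow> le x y \<Longrightarrow> le y z \<Longrightarrow> le x z"
  using ida_axioms by meson
lemma J_upper: "A \<subseteq> C \<Longrightarrow> a \<in> A \<Longrightarrow> le a (J A)" using ida_axioms by meson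
lemma J_least: "A \<subseteq> C \<Longrightarrow> u \<in> C \<Longrightarrow> (\<And>a. a \<in> A \<Longrightarrow> le a u) \<Longrightarrow> le (J A) u"
  using ida_axioms by meson
lemma m_assoc: "x \<in> C \<Longrightarrow> y \<in> C \<Longrightarrow> z \<in> C \<Longrightarrow> m (m x y) z = m x (m y z)"
  using ida_axioms by meson
lemma m_unit_left: "x \<in> C \<Longrightarrow> m e x = x" using ida_axioms by meson
lemma m_unit_right: "x \<in> C \<Longrightarrow> m x e = x" using ida_axioms by meson
lemma m_J_right: "x \<in> C \<Longrightarrow> A \<subseteq> C \<Longrightarrow> m x (J A) = J ((\<lambda>a. m x a) ` A)"
  using ida_axioms by meson
lemma m_J_left: "x \<in> C \<Longrightarrow> A \<subseteq> C \<Longrightarrow> m (J A) x = J ((\<lambda>a. m a x) ` A)"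
  using ida_axioms by meson
lemma s_s: "x \<in> C \<Longrightarrow> s (s x) = x" using ida_axioms by meson
lemma s_m: "x \<in> C \<Longrightarrow> y \<in> C \<Longrightarrow> s (m x y) = m (s y) (s x)" using ida_axioms by meson
lemma s_J: "A \<subseteq> C \<Longrightarrow> s (J A) = J (s ` A)" using ida_axioms by meson
lemma n_m_nn: "x \<in> C \<Longrightarrow> y \<in> C \<Longrightarrow> n (m x (n (n y))) = n (m x y)"
  using ida_axioms by meson
lemma n_J_nn: "A \<subseteq> C \<Longrightarrow> n (J ((\<lambda>x. n (n x)) ` A)) = n (J A)" using ida_axioms by meson
lemma s_n: "x \<in> C \<Longrightarrow> s (n x) = n x" using ida_axioms by meson
lemma nn_nn_m: "x \<in> C \<Longrightarrow> y \<in> C \<Longrightarrow> n (n (m (n (n x)) y)) = n (J {n x, n (J {n x, y})})"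
  using ida_axioms by meson

lemma J_eqI:
  "A \<subseteq> C \<Longrightarrow> x \<in> C \<Longrightarrow> (\<And>a. a \<in> A \<Longrightarrow> le a x) \<Longrightarrow>
   (\<And>u. u \<in> C \<Longrightarrow> (\<And>a. a \<in> A \<Longrightarrow> le a u) \<Longrightarrow> le x u) \<Longrightarrow> J A = x"
  by (meson J_closed J_least J_upper le_antisym)

lemma J_singleton: "x \<in> C \<Longrightarrow> J {x} = x"
  by (rule J_eqI) (auto intro: le_refl)

lemma J_Union: "F \<subseteq> Pow C \<Longrightarrow> J (\<Union>F) = J (J ` F)"
proof (rule J_eqI)
  assume F: "F \<subseteq> Pow C"
  then have JF: "J ` F \<subseteq> C" using J_closed by blast
  show "\<Union>F \<subseteq> C" using F by blast
  show "J (J ` F) \<in> C" using JF J_closed by blast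
  show "le a (J (J ` F))" if a: "a \<in> \<Union>F" for a
  proof -
    obtain X where X: "X \<in> F" "a \<in> X" using a by blast
    then have "le a (J X)" "le (J X) (J (J ` F))" using F JF J_upper by blast+
    then show ?thesis using X F JF J_closed le_trans by (meson PowD imageI subsetD)
  qed
  show "le (J (J ` F)) u" if "u \<in> C" "\<And>a. a \<in> \<Union>F \<Longrightarrow> le a u" for u
    using JF that F by (intro J_least) (auto intro!: J_least)
qed

lemma J_insert: "S \<subseteq> C \<Longrightarrow> t \<in> C \<Longrightarrow> J {t, J S} = J (insert t S)"
  using J_Union[of "{{t}, S}"] J_singleton by simp

lemma J_empty_join: "x \<in> C \<Longrightarrow> J {J {}, x} = x"
  using J_insert[of "{}" x] J_singleton by (simp add: insert_commute)

lemma J_join_distrib: "S \<subseteq> C \<Longrightarrow> S \<noteq> {} \<Longrightarrow> u \<in> C \<Longrightarrow> J {J S, u} = J ((\<lambda>x. J {x, u}) ` S)"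
proof -
  assume S: "S \<subseteq> C" "S \<noteq> {}" and u: "u \<in> C"
  have "J {J S, u} = J (insert u S)" using J_insert[OF S(1) u] by (simp add: insert_commute)
  also have "insert u S = \<Union> ((\<lambda>x. {x, u}) ` S)" using S(2) by auto
  also have "J \<dots> = J (J ` (\<lambda>x. {x, u}) ` S)" using S u by (intro J_Union) auto
  finally show ?thesis by (simp add: image_image)
qed

lemma m_J_J: "A \<subseteq> C \<Longrightarrow> B \<subseteq> C \<Longrightarrow> m (J A) (J B) = J {m a b | a b. a \<in> A \<and> b \<in> B}"
proof -
  assume A: "A \<subseteq> C" and B: "B \<subseteq> C"
  have "m (J A) (J B) = J ((\<lambda>a. m a (J B)) ` A)" using A B J_closed m_J_left by blast
  also have "\<dots> = J ((\<lambda>a. J ((\<lambda>b. m a b) ` B)) ` A)"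
    using A B m_J_right by (metis (no_types, lifting) image_cong subsetD)
  also have "\<dots> = J (\<Union> ((\<lambda>a. (\<lambda>b. m a b) ` B) ` A))"
    using A B m_closed by (subst J_Union) (auto simp: image_image)
  also have "\<Union> ((\<lambda>a. (\<lambda>b. m a b) ` B) ` A) = {m a b | a b. a \<in> A \<and> b \<in> B}" by blast
  finally show ?thesis .
qed

lemma n_n_n: "x \<in> C \<Longrightarrow> n (n (n x)) = n x"
  using n_J_nn[of "{x}"] J_singleton n_closed by simp

lemma n_J_pair_nn: "x \<in> C \<Longrightarrow> y \<in> C \<Longrightarrow> n (J {n (n x), n (n y)}) = n (J {x, y})"
  using n_J_nn[of "{x, y}"] by simp

lemma tests_subset: "W \<subseteq> C"
  unfolding ida_tests_def using n_closed by blast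

lemma n_in_tests: "x \<in> C \<Longrightarrow> n x \<in> W"
  unfolding ida_tests_def by blast

lemma bullet_closed: "a \<in> C \<Longrightarrow> w \<in> C \<Longrightarrow> bullet K a w \<in> C"
  unfolding bullet_def by (simp add: m_closed n_closed)

lemma tests_n_n: "w \<in> W \<Longrightarrow> n (n w) = w"
  unfolding ida_tests_def using n_n_n by blast

lemma tle_iff: "tle K a b \<longleftrightarrow> n (n (J {a, b})) = b"
  by (simp add: tle_def tvee_def)

lemma tvee_is_lub:
  assumes V: "V \<subseteq> W"
  shows "oml_is_lub (tests_oml K) V (tvee K V)"
proof -
  have VC: "V \<subseteq> C" using V tests_subset by blast
  have JC: "J V \<in> C" using VC J_closed by blast
  have upper: "tle K a (tvee K V)" if a: "a \<in> V" for a
  proof -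
    have aC: "a \<in> C" using a VC by blast
    have "n (J {a, n (n (J V))}) = n (J {n (n a), n (n (J V))})" using a V tests_n_n by auto
    also have "\<dots> = n (J {a, J V})" using n_J_pair_nn aC JC by blast
    also have "J {a, J V} = J V" using J_upper[OF VC a] by (simp add: ida_le_def)
    finally show ?thesis unfolding tle_iff tvee_def by simp
  qed
  have least: "tle K (tvee K V) u" if u: "u \<in> W" "\<And>a. a \<in> V \<Longrightarrow> tle K a u" for u
  proof -
    have uC: "u \<in> C" using u tests_subset by blast
    have key: "n (J {J V, u}) = n u"
    proof (cases "V = {}")
      case True
      then show ?thesis using J_empty_join uC by simp
    next
      case False
      have "n (J {J V, u}) = n (J ((\<lambda>x. J {x, u}) ` V))" using J_join_distrib[OF VC False uC] by simp
      also have "\<dots> = n (J ((\<lambda>x. n (n x)) ` (\<lambda>x. J {x, u}) ` V))"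
        using VC uC J_closed by (intro n_J_nn[symmetric]) auto
      also have "(\<lambda>x. n (n x)) ` (\<lambda>x. J {x, u}) ` V = {u}"
        using u(2) False unfolding tle_iff by (auto simp: image_image)
      finally show ?thesis using J_singleton uC by simp
    qed
    have "n (J {n (n (J V)), u}) = n (J {n (n (J V)), n (n u)})" using tests_n_n u by simp
    also have "\<dots> = n (J {J V, u})" using n_J_pair_nn JC uC by blast
    finally show ?thesis unfolding tle_iff tvee_def using key tests_n_n u(1) by simp
  qed
  have "tvee K V \<in> W" unfolding tvee_def using JC n_closed n_in_tests by blast
  then show ?thesis unfolding oml_is_lub_def using upper least by simp
qed

lemma n_J_empty: "n (J {}) = n (n e)"
proof -
  define z where "z = n (n (J {}))"
  have JC: "J {} \<in> C" using J_closed by blast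
  have zC: "z \<in> C" unfolding z_def using JC n_closed by blast
  have nnz: "n (n z) = z" unfolding z_def using n_n_n JC n_closed by metis
  have ax: "n (n (m (n (n (n z))) e)) = n (J {n (n z), n (J {n (n z), e})})"
    using nn_nn_m[of "n z" e] zC n_closed e_closed by blast
  have lhs: "n (n (m (n (n (n z))) e)) = n z"
    using n_n_n zC m_unit_right n_closed by simp
  have "n (J {z, e}) = n (J {n (n (J {})), n (n e)})" using n_J_pair_nn[OF zC e_closed] nnz z_def by simp
  also have "\<dots> = n e" using n_J_pair_nn[OF JC e_closed] J_empty_join e_closed by simp
  finally have b: "n (J {z, e}) = n e" .
  have "n (J {z, n e}) = n (J {n (n (J {})), n (n (n e))})" unfolding z_def using n_n_n e_closed by simp
  also have "\<dots> = n (n e)" using n_J_pair_nn[OF JC n_closed[OF e_closed]] J_empty_join n_closed e_closed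
    by simp
  finally have c: "n (J {z, n e}) = n (n e)" .
  have "n z = n (n e)" using ax lhs nnz b c by simp
  then show ?thesis unfolding z_def using n_n_n JC by simp
qed

end

locale semi_foulis = ida_algebra +
  assumes tests_complete: "complete_oml (tests_oml K)"
begin

abbreviation "M \<equiv> tests_oml K"

lemma tests_Sup: "V \<subseteq> W \<Longrightarrow> oml_Sup M V = n (n (J V))"
  using oml_Sup_eqI[OF oml_antisym[OF tests_complete] tvee_is_lub] by (simp add: tvee_def)

lemma tests_join: "a \<in> W \<Longrightarrow> b \<in> W \<Longrightarrow> oml_join M a b = n (n (J {a, b}))"
  unfolding oml_join_def by (rule tests_Sup) auto

lemma tests_top: "oml_top M = n (n e)"
proof -
  define b where "b = n (n (J {}))"
  have JC: "J {} \<in> C" using J_closed by blast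
  have b: "oml_bot M = b" unfolding oml_bot_def b_def by (rule tests_Sup) auto
  have bW: "b \<in> W" "n b \<in> W" unfolding b_def using n_in_tests n_closed JC by auto
  have "oml_top M = oml_join M b (n b)"
    using oml_join_perp[OF tests_complete, of b] bW by simp
  also have "\<dots> = n (n (J {n (n (J {})), n (n (n (n (n (J {})))))}))"
    using tests_join bW n_n_n JC n_closed unfolding b_def by simp
  also have "n (J {n (n (J {})), n (n (n (n (n (J {})))))}) = n (J {J {}, n (n (n (J {})))})"
    using n_J_pair_nn JC n_closed by blast
  also have "\<dots> = n (n (n (n (J {}))))" using J_empty_join n_closed JC by simp
  finally show ?thesis using n_n_n n_closed JC n_J_empty e_closed by simp
qed

lemma top_in_tests: "oml_top M \<in> W"
  using tests_top n_in_tests[OF n_closed[OF e_closed]] by simp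

lemma tests_meet: "a \<in> W \<Longrightarrow> b \<in> W \<Longrightarrow> oml_meet M a b = n (J {n a, n b})"
proof -
  assume a: "a \<in> W" and b: "b \<in> W"
  have anti: "\<And>x y. x \<in> W \<Longrightarrow> y \<in> W \<Longrightarrow> tle K x y \<Longrightarrow> tle K (n y) (n x)"
    using oml_perp_antimono[OF tests_complete] by simp
  define j where "j = tvee K {n a, n b}"
  have naW: "n a \<in> W" "n b \<in> W" using a b tests_subset n_in_tests by auto
  then have lub: "oml_is_lub M {n a, n b} j" unfolding j_def by (intro tvee_is_lub) auto
  then have jW: "j \<in> W" by (simp add: oml_is_lub_def)
  then have njW: "n j \<in> W" using tests_subset n_in_tests by blast
  have nj: "n j = n (J {n a, n b})"
    unfolding j_def tvee_def using naW tests_subset by (intro n_n_n J_closed) auto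
  have "tle K (n j) x" if x: "x \<in> {a, b}" for x
  proof -
    have "x \<in> W" "tle K (n x) j" using lub x a b unfolding oml_is_lub_def by auto
    then show ?thesis using anti[of "n x" j] jW tests_n_n n_in_tests tests_subset by force
  qed
  moreover have "tle K u (n j)" if u: "u \<in> W" "tle K u a" "tle K u b" for u
  proof -
    have "n u \<in> W" using u n_in_tests tests_subset by blast
    then have "tle K j (n u)" using lub anti u a b unfolding oml_is_lub_def by simp
    then show ?thesis using anti[of j "n u"] jW \<open>n u \<in> W\<close> tests_n_n[OF u(1)] by simp
  qed
  ultimately have "oml_is_glb M {a, b} (n j)" unfolding oml_is_glb_def using njW by simp
  then show ?thesis
    unfolding oml_meet_def nj using oml_antisym[OF tests_complete] by (intro oml_Inf_eqI)
qed

lemma n_oml_Sup_bullet_top: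
  assumes H: "H \<subseteq> C"
  shows "n (oml_Sup M ((\<lambda>a. bullet K a (oml_top M)) ` H)) = n (J H)"
proof -
  have tC: "oml_top M \<in> C" using top_in_tests tests_subset by blast
  have HC: "(\<lambda>a. m a (oml_top M)) ` H \<subseteq> C" using H tC m_closed by blast
  have bullets: "(\<lambda>a. bullet K a (oml_top M)) ` H = (\<lambda>x. n (n x)) ` (\<lambda>a. m a (oml_top M)) ` H"
    by (simp add: image_image bullet_def)
  then have "(\<lambda>a. bullet K a (oml_top M)) ` H \<subseteq> W" using HC n_closed n_in_tests by auto
  then have "n (oml_Sup M ((\<lambda>a. bullet K a (oml_top M)) ` H))
      = n (J ((\<lambda>x. n (n x)) ` (\<lambda>a. m a (oml_top M)) ` H))"
    using tests_Sup n_n_n J_closed tests_subset bullets by (metis subset_trans)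
  also have "\<dots> = n (J ((\<lambda>a. m a (oml_top M)) ` H))" using n_J_nn HC by blast
  also have "\<dots> = n (m (J H) (n (n e)))" using m_J_left[OF tC H] tests_top by simp
  also have "\<dots> = n (J H)" using n_m_nn J_closed[OF H] e_closed m_unit_right by simp
  finally show ?thesis .
qed

text \<open>The fourth IDA axiom says precisely that \<open>\<sim>k\<close> acts on tests as the Sasaki
  projection onto \<open>\<sim>k\<close>.\<close>

lemma proj_n_eq_bullet:
  assumes k: "k \<in> C"
  shows "proj M (n k) = (\<lambda>x\<in>W. bullet K (n k) x)"
  unfolding proj_def tests_oml_simps
proof (rule restrict_ext)
  fix x assume x: "x \<in> W"
  have xC: "x \<in> C" using x tests_subset by blast
  have nkW: "n k \<in> W" "n (n k) \<in> W" using k n_closed n_in_tests by auto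
  have jW: "n (n (J {n (n k), x})) \<in> W" using n_in_tests n_closed J_closed k xC by auto
  have "oml_meet M (n k) (oml_join M (n (n k)) x) = n (J {n (n k), n (n (n (J {n (n k), x})))})"
    using tests_join[OF nkW(2) x] tests_meet[OF nkW(1) jW] tests_n_n k by (simp add: n_n_n)
  also have "\<dots> = n (J {n (n k), n (J {n (n k), x})})"
    using n_n_n J_closed[of "{n (n k), x}"] n_closed k xC by simp
  also have "\<dots> = n (n (m (n (n (n k))) x))" using nn_nn_m[OF n_closed[OF k] xC] by simp
  also have "\<dots> = bullet K (n k) x" using n_n_n k by (simp add: bullet_def)
  finally show "oml_meet M (n k) (oml_join M (n (n k)) x) = bullet K (n k) x" .
qed

end

section \<open>Transport along isomorphisms\<close>

definition ida_generated_by :: "('a, 'z) ida_scheme \<Rightarrow> 'a set \<Rightarrow> bool" where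
  "ida_generated_by K S \<longleftrightarrow> (\<forall>A. S \<subseteq> A \<and> A \<subseteq> ida_carrier K \<and>
     (\<forall>x\<in>A. \<forall>y\<in>A. ida_mult K x y \<in> A) \<and> (\<forall>x\<in>A. ida_inv K x \<in> A) \<and>
     (\<forall>B\<subseteq>A. ida_Sup K B \<in> A) \<longrightarrow> A = ida_carrier K)"

definition Sup_injective_on :: "('a, 'z) ida_scheme \<Rightarrow> 'a set \<Rightarrow> bool" where
  "Sup_injective_on K S \<longleftrightarrow>
     (\<forall>X Y. X \<subseteq> S \<and> Y \<subseteq> S \<longrightarrow> (ida_Sup K X = ida_Sup K Y \<longleftrightarrow> X = Y))"

definition tequiv_separates :: "('a, 'z) ida_scheme \<Rightarrow> 'a set \<Rightarrow> bool" where
  "tequiv_separates K S \<longleftrightarrow> (\<forall>s\<in>S. \<forall>t\<in>S. s = t \<longleftrightarrow> tequiv K s t)"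

lemma toda_iff:
  "toda T K \<longleftrightarrow> is_ida K \<and> complete_oml (tests_oml K) \<and> ida_generated_by K (T K) \<and>
     Sup_injective_on K (T K) \<and> tequiv_separates K (T K)"
  unfolding toda_def ida_generated_by_def Sup_injective_on_def tequiv_separates_def ..

lemma ida_homD:
  assumes "ida_hom A B f"
  shows "x \<in> ida_carrier A \<Longrightarrow> f x \<in> ida_carrier B"
    and "X \<subseteq> ida_carrier A \<Longrightarrow> f (ida_Sup A X) = ida_Sup B (f ` X)"
    and "x \<in> ida_carrier A \<Longrightarrow> y \<in> ida_carrier A \<Longrightarrow> f (ida_mult A x y) = ida_mult B (f x) (f y)"
    and "x \<in> ida_carrier A \<Longrightarrow> f (ida_inv A x) = ida_inv B (f x)"
    and "x \<in> ida_carrier A \<Longrightarrow> f (ida_neg A x) = ida_neg B (f x)"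
    and "f (ida_unit A) = ida_unit B"
  using assms unfolding ida_hom_def by blast+

lemma ida_hom_comp:
  assumes f: "ida_hom A B f" and h: "ida_hom B D h"
  shows "ida_hom A D (h \<circ> f)"
  unfolding ida_hom_def
proof (intro conjI ballI allI impI)
  show "(h \<circ> f) (ida_Sup A X) = ida_Sup D ((h \<circ> f) ` X)" if "X \<subseteq> ida_carrier A" for X
  proof -
    have "f ` X \<subseteq> ida_carrier B" using that ida_homD(1)[OF f] by blast
    then show ?thesis using that by (simp add: ida_homD(2)[OF f] ida_homD(2)[OF h] image_comp)
  qed
qed (auto simp: ida_homD[OF f] ida_homD[OF h])

locale ida_isomorphism = A: ida_algebra A for A :: "('a, 'z) ida_scheme" +
  fixes B :: "('b, 'y) ida_scheme" and f :: "'a \<Rightarrow> 'b"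
  assumes iso: "ida_iso A B f"
begin

abbreviation "g \<equiv> inv_into A.C f"

lemma bij: "bij_betw f A.C (ida_carrier B)"
  using iso by (simp add: ida_iso_def)

lemma hom: "ida_hom A B f"
  using iso by (simp add: ida_iso_def)

lemma target_carrier: "ida_carrier B = f ` A.C"
  using bij by (simp add: bij_betw_def)

lemma f_eq_iff: "a \<in> A.C \<Longrightarrow> b \<in> A.C \<Longrightarrow> f a = f b \<longleftrightarrow> a = b"
  using bij by (metis bij_betw_inv_into_left)

lemma g_closed: "x \<in> ida_carrier B \<Longrightarrow> g x \<in> A.C"
  using bij by (metis bij_betw_def inv_into_into)

lemma f_g: "x \<in> ida_carrier B \<Longrightarrow> f (g x) = x"
  using bij by (metis bij_betw_inv_into_right)

lemma g_f: "a \<in> A.C \<Longrightarrow> g (f a) = a"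
  using bij by (metis bij_betw_inv_into_left)

lemma g_f_image: "X \<subseteq> A.C \<Longrightarrow> g ` f ` X = X"
  using g_f by (force simp: image_image)

lemmas f_J = ida_homD(2)[OF hom]
  and f_m = ida_homD(3)[OF hom]
  and f_s = ida_homD(4)[OF hom]
  and f_n = ida_homD(5)[OF hom]
  and f_e = ida_homD(6)[OF hom]

lemma g_J: "X \<subseteq> ida_carrier B \<Longrightarrow> g (ida_Sup B X) = A.J (g ` X)"
proof -
  assume "X \<subseteq> ida_carrier B"
  then obtain X0 where X0: "X0 \<subseteq> A.C" "X = f ` X0"
    unfolding target_carrier subset_image_iff by blast
  then have "g (ida_Sup B X) = g (f (A.J X0))" by (simp add: f_J)
  also have "\<dots> = A.J (g ` X)" using X0 by (simp add: g_f A.J_closed g_f_image)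
  finally show ?thesis .
qed

lemma g_m: "x \<in> ida_carrier B \<Longrightarrow> y \<in> ida_carrier B \<Longrightarrow> g (ida_mult B x y) = A.m (g x) (g y)"
  by (metis f_m f_g g_closed g_f A.m_closed)

lemma g_s: "x \<in> ida_carrier B \<Longrightarrow> g (ida_inv B x) = A.s (g x)"
  by (metis f_s f_g g_closed g_f A.s_closed)

lemma g_n: "x \<in> ida_carrier B \<Longrightarrow> g (ida_neg B x) = A.n (g x)"
  by (metis f_n f_g g_closed g_f A.n_closed)

lemma g_e: "g (ida_unit B) = A.e"
  by (metis f_e g_f A.e_closed)

lemma inverse_hom: "ida_hom B A g"
  unfolding ida_hom_def using g_closed g_J g_m g_s g_n g_e by blast


lemma g_image_closed: "X \<subseteq> ida_carrier B \<Longrightarrow> g ` X \<subseteq> A.C"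
  using g_closed by blast

lemma f_closed: "a \<in> A.C \<Longrightarrow> f a \<in> ida_carrier B"
  using bij bij_betwE by blast

lemma f_g_image: "X \<subseteq> ida_carrier B \<Longrightarrow> f ` g ` X = X"
  by (simp add: image_image f_g subset_iff)

lemma target_ops:
  shows "X \<subseteq> ida_carrier B \<Longrightarrow> ida_Sup B X = f (A.J (g ` X))"
    and "x \<in> ida_carrier B \<Longrightarrow> y \<in> ida_carrier B \<Longrightarrow> ida_mult B x y = f (A.m (g x) (g y))"
    and "x \<in> ida_carrier B \<Longrightarrow> ida_inv B x = f (A.s (g x))"
    and "x \<in> ida_carrier B \<Longrightarrow> ida_neg B x = f (A.n (g x))"
    and "ida_unit B = f A.e"
  using f_J[OF g_image_closed] f_g_image f_m[OF g_closed g_closed] f_s[OF g_closed]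
    f_n[OF g_closed] f_e f_g by simp_all

lemma target_closed:
  shows "X \<subseteq> ida_carrier B \<Longrightarrow> ida_Sup B X \<in> ida_carrier B"
    and "x \<in> ida_carrier B \<Longrightarrow> y \<in> ida_carrier B \<Longrightarrow> ida_mult B x y \<in> ida_carrier B"
    and "x \<in> ida_carrier B \<Longrightarrow> ida_inv B x \<in> ida_carrier B"
    and "x \<in> ida_carrier B \<Longrightarrow> ida_neg B x \<in> ida_carrier B"
    and "ida_unit B \<in> ida_carrier B"
  by (simp_all add: target_ops f_closed g_closed g_image_closed A.J_closed A.m_closed
      A.s_closed A.n_closed A.e_closed)

lemma g_inject: "x \<in> ida_carrier B \<Longrightarrow> y \<in> ida_carrier B \<Longrightarrow> g x = g y \<Longrightarrow> x = y"
  by (metis f_g)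

lemma target_le_iff:
  assumes "x \<in> ida_carrier B" "y \<in> ida_carrier B"
  shows "ida_le B x y \<longleftrightarrow> A.le (g x) (g y)"
proof -
  have "{x, y} \<subseteq> ida_carrier B" using assms by simp
  then have "ida_le B x y \<longleftrightarrow> g (ida_Sup B {x, y}) = g y"
    unfolding ida_le_def using assms(2) target_closed(1) g_inject by metis
  also have "g (ida_Sup B {x, y}) = A.J {g x, g y}" using assms g_J by simp
  finally show ?thesis by (simp add: ida_le_def)
qed

lemmas transport_simps = g_J g_m g_s g_n g_e g_closed g_image_closed target_closed

lemma target_is_ida: "is_ida B"
  unfolding is_ida_def Let_def
proof (intro conjI ballI allI impI)
  show "ida_le B a (ida_Sup B X)" if X: "X \<subseteq> ida_carrier B" and a: "a \<in> X" for X a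
    using A.J_upper[of "g ` X" "g a"] X a by (simp add: target_le_iff transport_simps subsetD[OF X])
  show "ida_le B (ida_Sup B X) u"
    if X: "X \<subseteq> ida_carrier B" and u: "u \<in> ida_carrier B" "\<forall>a\<in>X. ida_le B a u" for X u
    using A.J_least[of "g ` X" "g u"] X u by (simp add: target_le_iff transport_simps subsetD[OF X]) blast
  show "ida_mult B x (ida_Sup B X) = ida_Sup B ((\<lambda>a. ida_mult B x a) ` X)"
    if "x \<in> ida_carrier B" "X \<subseteq> ida_carrier B" for x X
    using that by (intro g_inject)
      (simp_all add: transport_simps image_subset_iff subsetD[OF that(2)] A.m_J_right image_image)
  show "ida_mult B (ida_Sup B X) x = ida_Sup B ((\<lambda>a. ida_mult B a x) ` X)"
    if "x \<in> ida_carrier B" "X \<subseteq> ida_carrier B" for x X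
    using that by (intro g_inject)
      (simp_all add: transport_simps image_subset_iff subsetD[OF that(2)] A.m_J_left image_image)
  show "ida_inv B (ida_Sup B X) = ida_Sup B (ida_inv B ` X)" if "X \<subseteq> ida_carrier B" for X
    using that by (intro g_inject)
      (simp_all add: transport_simps image_subset_iff subsetD[OF that] A.s_J image_image)
  show "ida_neg B (ida_Sup B ((\<lambda>x. ida_neg B (ida_neg B x)) ` X)) = ida_neg B (ida_Sup B X)"
    if "X \<subseteq> ida_carrier B" for X
    using that A.n_J_nn[of "g ` X"] by (intro g_inject)
      (simp_all add: transport_simps image_subset_iff subsetD[OF that] image_image)
qed (auto intro: g_inject simp: target_le_iff transport_simps A.le_refl A.le_antisym A.m_assoc
       A.m_unit_left A.m_unit_right A.s_s A.s_m A.n_m_nn A.s_n A.nn_nn_m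
       dest: A.le_trans[rotated 3])


lemma target_tests: "ida_tests B = f ` A.W"
  unfolding ida_tests_def target_carrier by (auto simp: image_image f_n)

lemma tle_image:
  assumes "a \<in> A.C" "b \<in> A.C"
  shows "tle B (f a) (f b) \<longleftrightarrow> tle A a b"
proof -
  have "ida_Sup B {f a, f b} = f (A.J {a, b})" using assms f_J[of "{a, b}"] by simp
  then show ?thesis
    unfolding tle_def tvee_def using assms by (simp add: f_n[symmetric] f_eq_iff A.J_closed A.n_closed)
qed

lemma bullet_image: "a \<in> A.C \<Longrightarrow> w \<in> A.C \<Longrightarrow> bullet B (f a) (f w) = f (bullet A a w)"
  unfolding bullet_def by (simp add: f_m f_n A.m_closed A.n_closed)

lemma target_tests_complete:
  assumes "complete_oml (tests_oml A)"
  shows "complete_oml (tests_oml B)"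
proof -
  have "bij_betw f A.W (ida_tests B)"
    using bij A.tests_subset target_tests by (auto simp: bij_betw_def intro: inj_on_subset)
  then interpret oml_order_iso "tests_oml A" "tests_oml B" f
    using assms A.tests_subset by unfold_locales (auto simp: tle_image f_n subsetD)
  show ?thesis by (rule target_complete)
qed

lemma tequiv_image: "a \<in> A.C \<Longrightarrow> b \<in> A.C \<Longrightarrow> tequiv B (f a) (f b) \<longleftrightarrow> tequiv A a b"
  unfolding tequiv_def target_tests
  by (simp add: bullet_image f_eq_iff subsetD[OF A.tests_subset] A.bullet_closed)


lemma generated_image:
  assumes S: "S \<subseteq> A.C" and gen: "ida_generated_by A S"
  shows "ida_generated_by B (f ` S)"
  unfolding ida_generated_by_def
proof (intro allI impI)
  fix D
  assume "f ` S \<subseteq> D \<and> D \<subseteq> ida_carrier B \<and> (\<forall>x\<in>D. \<forall>y\<in>D. ida_mult B x y \<in> D) \<and>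
    (\<forall>x\<in>D. ida_inv B x \<in> D) \<and> (\<forall>Y\<subseteq>D. ida_Sup B Y \<in> D)"
  then have SD: "f ` S \<subseteq> D" and DB: "D \<subseteq> ida_carrier B"
    and mD: "\<And>x y. x \<in> D \<Longrightarrow> y \<in> D \<Longrightarrow> ida_mult B x y \<in> D"
    and sD: "\<And>x. x \<in> D \<Longrightarrow> ida_inv B x \<in> D"
    and JD: "\<And>Y. Y \<subseteq> D \<Longrightarrow> ida_Sup B Y \<in> D"
    by blast+
  define D0 where "D0 = {a \<in> A.C. f a \<in> D}"
  have "D0 = A.C"
  proof (rule gen[unfolded ida_generated_by_def, rule_format], intro conjI ballI allI impI)
    show "S \<subseteq> D0" using S SD unfolding D0_def by blast
    show "D0 \<subseteq> A.C" unfolding D0_def by blast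
    show "A.m x y \<in> D0" if "x \<in> D0" "y \<in> D0" for x y
      using that mD unfolding D0_def by (simp add: f_m A.m_closed)
    show "A.s x \<in> D0" if "x \<in> D0" for x
      using that sD unfolding D0_def by (simp add: f_s A.s_closed)
    show "A.J Y \<in> D0" if "Y \<subseteq> D0" for Y
    proof -
      have "Y \<subseteq> A.C" "f ` Y \<subseteq> D" using that unfolding D0_def by blast+
      then show ?thesis using JD f_J A.J_closed unfolding D0_def by simp
    qed
  qed
  then show "D = ida_carrier B" using DB unfolding D0_def target_carrier by blast
qed

lemma Sup_injective_image:
  assumes S: "S \<subseteq> A.C" and inj: "Sup_injective_on A S"
  shows "Sup_injective_on B (f ` S)"
  unfolding Sup_injective_on_def
proof (intro allI impI)
  fix X Y assume "X \<subseteq> f ` S \<and> Y \<subseteq> f ` S"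
  then obtain X0 Y0 where X0: "X0 \<subseteq> S" "X = f ` X0" and Y0: "Y0 \<subseteq> S" "Y = f ` Y0"
    by (meson subset_image_iff)
  have inj_f: "inj_on f A.C" using bij by (simp add: bij_betw_def)
  have "ida_Sup B X = ida_Sup B Y \<longleftrightarrow> f (A.J X0) = f (A.J Y0)"
    using X0 Y0 S f_J by (metis subset_trans)
  also have "\<dots> \<longleftrightarrow> A.J X0 = A.J Y0"
    using X0(1) Y0(1) S by (intro f_eq_iff A.J_closed) auto
  also have "\<dots> \<longleftrightarrow> X0 = Y0" using inj X0 Y0 unfolding Sup_injective_on_def by blast
  also have "\<dots> \<longleftrightarrow> X = Y" using X0 Y0 S inj_on_image_eq_iff[OF inj_f] by (metis subset_trans)
  finally show "ida_Sup B X = ida_Sup B Y \<longleftrightarrow> X = Y" .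
qed

lemma tequiv_separates_image:
  "S \<subseteq> A.C \<Longrightarrow> tequiv_separates A S \<Longrightarrow> tequiv_separates B (f ` S)"
  unfolding tequiv_separates_def by (auto simp: tequiv_image f_eq_iff subsetD)

end

lemma ida_iso_inverse:
  assumes "is_ida A" and "ida_iso A B f"
  shows "ida_iso B A (inv_into (ida_carrier A) f)"
proof -
  interpret ida_isomorphism A B f using assms by unfold_locales
  show ?thesis unfolding ida_iso_def using inverse_hom bij bij_betw_inv_into by blast
qed

lemma ida_iso_comp: "ida_iso A B f \<Longrightarrow> ida_iso B D h \<Longrightarrow> ida_iso A D (h \<circ> f)"
  unfolding ida_iso_def using ida_hom_comp bij_betw_trans by blast

lemma toda_transfer:
  fixes TA :: "'a ida \<Rightarrow> 'a set" and TB :: "'b ida \<Rightarrow> 'b set"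
  assumes A: "toda TA A" and iso: "ida_iso A B f"
    and T1: "T1_at TA" "T1_at TB" and T4: "T4_at TA TB" "T4_at TB TA"
  shows "toda TB B"
proof -
  interpret ida_isomorphism A B f using A iso by unfold_locales (simp add: toda_def)
  have B: "is_ida B" by (rule target_is_ida)
  have TA: "TA A \<subseteq> A.C" using T1(1) A.is_ida unfolding T1_at_def inv_submonoid_def by blast
  have TB: "TB B \<subseteq> ida_carrier B" using T1(2) B unfolding T1_at_def inv_submonoid_def by blast
  have "TB B = f ` TA A"
  proof
    show "f ` TA A \<subseteq> TB B" using T4(1) A.is_ida B hom unfolding T4_at_def by blast
    have "g ` TB B \<subseteq> TA A" using T4(2) A.is_ida B inverse_hom unfolding T4_at_def by blast
    then show "TB B \<subseteq> f ` TA A" using TB f_g_image by (metis image_mono)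
  qed
  then show ?thesis
    using A TA unfolding toda_iff
    by (simp add: B target_tests_complete generated_image Sup_injective_image tequiv_separates_image)
qed

section \<open>Representation by down-sets of \<open>T(K)\<close>\<close>

lemma image_setcompr_hom:
  assumes "\<And>a b. a \<in> A \<Longrightarrow> b \<in> B \<Longrightarrow> \<phi> (f a b) = g (\<phi> a) (\<phi> b)"
  shows "\<phi> ` {f a b | a b. a \<in> A \<and> b \<in> B} = {g a b | a b. a \<in> \<phi> ` A \<and> b \<in> \<phi> ` B}"
  using assms by (auto 0 4 intro!: image_eqI)

locale toda_algebra =
  fixes T :: "'a ida \<Rightarrow> 'a set" and K :: "'a ida"
  assumes toda: "toda T K" and T1_at_T: "T1_at T"

sublocale toda_algebra \<subseteq> semi_foulis K
  using toda by unfold_locales (simp_all add: toda_def)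

context toda_algebra
begin

abbreviation "h \<equiv> hdown K (T K)"

lemma tests_subset_T: "W \<subseteq> T K"
  and T_subset: "T K \<subseteq> C"
  and unit_in_T: "e \<in> T K"
  and m_in_T: "x \<in> T K \<Longrightarrow> y \<in> T K \<Longrightarrow> m x y \<in> T K"
  and s_in_T: "x \<in> T K \<Longrightarrow> s x \<in> T K"
  using T1_at_T is_ida unfolding T1_at_def inv_submonoid_def by blast+

lemma hdown_subset: "h k \<subseteq> T K"
  unfolding hdown_def by blast

lemma hdown_subset_carrier: "h k \<subseteq> C"
  using hdown_subset T_subset by blast

lemma hdown_J: "S \<subseteq> T K \<Longrightarrow> h (J S) = S"
proof
  assume S: "S \<subseteq> T K"
  then have SC: "S \<subseteq> C" using T_subset by blast
  show "S \<subseteq> h (J S)" unfolding hdown_def using S SC J_upper by blast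
  show "h (J S) \<subseteq> S"
  proof
    fix t assume "t \<in> h (J S)"
    then have t: "t \<in> T K" "le t (J S)" unfolding hdown_def by auto
    then have "J (insert t S) = J S" using J_insert[OF SC] T_subset by (auto simp: ida_le_def)
    moreover have "Sup_injective_on K (T K)" using toda by (simp add: toda_iff)
    ultimately have "insert t S = S"
      using S t(1) unfolding Sup_injective_on_def by simp
    then show "t \<in> S" by blast
  qed
qed

text \<open>The joins of subsets of \<open>T(K)\<close> form a subalgebra containing \<open>T(K)\<close>.\<close>

lemma J_image_Pow_T: "J ` Pow (T K) = C"
proof -
  have gen: "ida_generated_by K (T K)" using toda by (simp add: toda_iff)
  show ?thesis
  proof (rule gen[unfolded ida_generated_by_def, rule_format], intro conjI ballI allI impI)
    show "T K \<subseteq> J ` Pow (T K)" using T_subset J_singleton by (force simp: image_iff)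
    show "J ` Pow (T K) \<subseteq> C" using T_subset J_closed by blast
    show "m x y \<in> J ` Pow (T K)" if xy: "x \<in> J ` Pow (T K)" "y \<in> J ` Pow (T K)" for x y
    proof -
      obtain S R where SR: "S \<subseteq> T K" "R \<subseteq> T K" "x = J S" "y = J R" using xy by blast
      then have "m x y = J {m a b | a b. a \<in> S \<and> b \<in> R}" using m_J_J T_subset by blast
      moreover have "{m a b | a b. a \<in> S \<and> b \<in> R} \<subseteq> T K" using SR m_in_T by blast
      ultimately show ?thesis by blast
    qed
    show "s x \<in> J ` Pow (T K)" if x: "x \<in> J ` Pow (T K)" for x
    proof -
      obtain S where S: "S \<subseteq> T K" "x = J S" using x by blast
      then have "s x = J (s ` S)" using s_J T_subset by blast
      moreover have "s ` S \<subseteq> T K" using S s_in_T by blast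
      ultimately show ?thesis by blast
    qed
    show "J Y \<in> J ` Pow (T K)" if Y: "Y \<subseteq> J ` Pow (T K)" for Y
    proof -
      obtain F where F: "F \<subseteq> Pow (T K)" "Y = J ` F" using Y by (rule subset_imageE)
      have "F \<subseteq> Pow C" using F(1) T_subset by blast
      then have "J Y = J (\<Union>F)" using J_Union F(2) by simp
      moreover have "\<Union>F \<subseteq> T K" using F by blast
      ultimately show ?thesis by blast
    qed
  qed
qed

lemma J_hdown: "k \<in> C \<Longrightarrow> J (h k) = k"
proof -
  assume "k \<in> C"
  then obtain S where "k = J S" "S \<in> Pow (T K)" unfolding J_image_Pow_T[symmetric] by (rule imageE)
  then show ?thesis using hdown_J by simp
qed

lemma hdown_bij: "bij_betw h C (Pow (T K))"
proof (rule bij_betw_byWitness[where f' = J])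
  show "\<forall>k\<in>C. J (h k) = k" using J_hdown by blast
  show "\<forall>S\<in>Pow (T K). h (J S) = S" using hdown_J by blast
  show "h ` C \<subseteq> Pow (T K)" using hdown_subset by blast
  show "J ` Pow (T K) \<subseteq> C" using J_image_Pow_T by simp
qed

lemma hdown_Sup: "X \<subseteq> C \<Longrightarrow> h (J X) = \<Union> (h ` X)"
proof -
  assume X: "X \<subseteq> C"
  have "h ` X \<subseteq> Pow C" using hdown_subset_carrier by blast
  then have "J (\<Union> (h ` X)) = J (J ` h ` X)" by (rule J_Union)
  also have "J ` h ` X = X" using J_hdown X by (simp add: image_image subset_iff)
  finally have "h (J X) = h (J (\<Union> (h ` X)))" by simp
  also have "\<dots> = \<Union> (h ` X)" using hdown_subset by (intro hdown_J) blast
  finally show ?thesis .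
qed

lemma hdown_mult: "x \<in> C \<Longrightarrow> y \<in> C \<Longrightarrow> h (m x y) = {m a b | a b. a \<in> h x \<and> b \<in> h y}"
proof -
  assume "x \<in> C" "y \<in> C"
  then have "m x y = J {m a b | a b. a \<in> h x \<and> b \<in> h y}"
    using m_J_J[OF hdown_subset_carrier[of x] hdown_subset_carrier[of y]] J_hdown by simp
  moreover have "{m a b | a b. a \<in> h x \<and> b \<in> h y} \<subseteq> T K" using hdown_subset m_in_T by blast
  ultimately show ?thesis using hdown_J by simp
qed

lemma hdown_inv: "x \<in> C \<Longrightarrow> h (s x) = s ` h x"
proof -
  assume "x \<in> C"
  then have "s x = J (s ` h x)" using s_J[OF hdown_subset_carrier[of x]] J_hdown by simp
  moreover have "s ` h x \<subseteq> T K" using hdown_subset s_in_T by blast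
  ultimately show ?thesis using hdown_J by simp
qed

lemma hdown_neg: "x \<in> C \<Longrightarrow> h (n x) = {n x}"
  using hdown_J[of "{n x}"] J_singleton n_in_tests tests_subset_T n_closed by auto

lemma hdown_unit: "h e = {e}"
  using hdown_J[of "{e}"] J_singleton e_closed unit_in_T by simp

lemma box_iso: "ida_iso K (box_ida K (T K)) h"
  unfolding ida_iso_def ida_hom_def
  using hdown_bij hdown_subset hdown_Sup J_hdown hdown_unit
  by (simp add: box_ida_def image_subset_iff)

abbreviation "rep k \<equiv> \<lambda>w\<in>W. bullet K k w"

lemma pset_neg_image: "x \<in> C \<Longrightarrow> ida_neg (pset_ida M L) (rep ` h x) = {rep (n x)}"
proof -
  assume x: "x \<in> C"
  have "(\<lambda>a. a (oml_top M)) ` rep ` h x = (\<lambda>a. bullet K a (oml_top M)) ` h x"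
    using top_in_tests by (simp add: image_image)
  then have "ida_neg (pset_ida M L) (rep ` h x) = {proj M (n (J (h x)))}"
    using n_oml_Sup_bullet_top[OF hdown_subset_carrier] by (simp add: pset_ida_def)
  then show ?thesis using proj_n_eq_bullet x J_hdown by simp
qed

lemma rep_im_iso: "T2_at T TL \<Longrightarrow> im_iso K (T K) (lin_ida M) (TL (lin_ida M)) rep"
  using toda is_ida tests_complete unfolding T2_at_def toda_iff tequiv_separates_def by blast

lemma pset_iso:
  assumes "im_iso K (T K) (lin_ida M) L rep"
  shows "ida_iso K (pset_ida M L) (\<lambda>k. rep ` h k)"
proof -
  from assms have bij: "bij_betw rep (T K) L"
    and rep_m: "\<And>a b. a \<in> T K \<Longrightarrow> b \<in> T K \<Longrightarrow> rep (m a b) = ida_mult (lin_ida M) (rep a) (rep b)"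
    and rep_s: "\<And>a. a \<in> T K \<Longrightarrow> rep (s a) = ida_inv (lin_ida M) (rep a)"
    and rep_e: "rep e = ida_unit (lin_ida M)"
    unfolding im_iso_def by blast+
  have "bij_betw (\<lambda>k. rep ` h k) C (Pow L)"
    using bij_betw_trans[OF hdown_bij bij_betw_image_Pow[OF bij]] by (simp add: comp_def)
  moreover have "ida_hom K (pset_ida M L) (\<lambda>k. rep ` h k)"
    unfolding ida_hom_def
  proof (intro conjI ballI allI impI)
    show "(\<lambda>k. rep ` h k) ` C \<subseteq> ida_carrier (pset_ida M L)"
      using bij hdown_subset by (auto simp: pset_ida_def bij_betw_def)
    show "rep ` h (J X) = ida_Sup (pset_ida M L) ((\<lambda>k. rep ` h k) ` X)" if "X \<subseteq> C" for X
      using hdown_Sup[OF that] by (auto simp: pset_ida_def)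
    show "rep ` h (m x y) = ida_mult (pset_ida M L) (rep ` h x) (rep ` h y)"
      if "x \<in> C" "y \<in> C" for x y
    proof -
      have rep_hm: "\<And>a b. a \<in> h x \<Longrightarrow> b \<in> h y \<Longrightarrow>
          rep (m a b) = ida_mult (lin_ida M) (rep a) (rep b)"
        using hdown_subset by (intro rep_m) blast+
      show ?thesis
        using hdown_mult[OF that] image_setcompr_hom[of "h x" "h y" rep m, OF rep_hm]
        by (simp add: pset_ida_def)
    qed
    show "rep ` h (s x) = ida_inv (pset_ida M L) (rep ` h x)" if "x \<in> C" for x
      using hdown_inv[OF that] rep_s hdown_subset
      by (simp add: pset_ida_def image_image subset_iff)
    show "rep ` h (n x) = ida_neg (pset_ida M L) (rep ` h x)" if "x \<in> C" for x
      using hdown_neg[OF that] pset_neg_image[OF that] by simp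
    show "rep ` h e = ida_unit (pset_ida M L)"
      using hdown_unit rep_e by (simp add: pset_ida_def)
  qed
  ultimately show ?thesis unfolding ida_iso_def by (simp add: pset_ida_def)
qed

end

theorem corollary6p4:
  fixes Ta :: "'a ida \<Rightarrow> 'a set"
    and Tl :: "('a \<Rightarrow> 'a) ida \<Rightarrow> ('a \<Rightarrow> 'a) set"
    and Tp :: "'a set ida \<Rightarrow> 'a set set"
    and Tq :: "('a \<Rightarrow> 'a) set ida \<Rightarrow> ('a \<Rightarrow> 'a) set set"
    and K :: "'a ida"
  assumes T1: "T1_at Ta" "T1_at Tl" "T1_at Tp" "T1_at Tq"
    and T2: "T2_at Ta Tl"
    and T3: "T3_at Tl Tq"
    and T4: "T4_at Ta Ta" "T4_at Ta Tl" "T4_at Ta Tp" "T4_at Ta Tq"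
            "T4_at Tl Ta" "T4_at Tl Tl" "T4_at Tl Tp" "T4_at Tl Tq"
            "T4_at Tp Ta" "T4_at Tp Tl" "T4_at Tp Tp" "T4_at Tp Tq"
            "T4_at Tq Ta" "T4_at Tq Tl" "T4_at Tq Tp" "T4_at Tq Tq"
    and K: "toda Ta K"
  shows "toda Tq (pset_ida (tests_oml K) (Tl (lin_ida (tests_oml K)))) \<and>
         toda Tp (box_ida K (Ta K)) \<and>
         (\<exists>f. ida_iso K (pset_ida (tests_oml K) (Tl (lin_ida (tests_oml K)))) f) \<and>
         (\<exists>f. ida_iso K (box_ida K (Ta K)) f) \<and>
         (\<exists>f. ida_iso (pset_ida (tests_oml K) (Tl (lin_ida (tests_oml K)))) (box_ida K (Ta K)) f)"
proof -
  interpret toda_algebra Ta K using K T1(1) by unfold_locales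
  have pset: "ida_iso K (pset_ida M (Tl (lin_ida M))) (\<lambda>k. rep ` h k)"
    using rep_im_iso[OF T2] by (rule pset_iso)
  have box: "ida_iso K (box_ida K (Ta K)) h"
    by (rule box_iso)
  have "ida_iso (pset_ida M (Tl (lin_ida M))) (box_ida K (Ta K)) (h \<circ> inv_into C (\<lambda>k. rep ` h k))"
    using ida_iso_comp[OF ida_iso_inverse[OF is_ida pset] box] .
  moreover have "toda Tq (pset_ida M (Tl (lin_ida M)))"
    using K pset T1(1,4) T4(4,13) by (rule toda_transfer)
  moreover have "toda Tp (box_ida K (Ta K))"
    using K box T1(1,3) T4(3,9) by (rule toda_transfer)
  ultimately show ?thesis
    using pset box by blast
qed

end
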